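(* For every $n\ge1$, the set of integer posets on $[n]$, ordered by the weak order on integer relations, is a lattice.
   Context: An integer relation of size $n$ is a reflexive binary relation $R$ on $[n]=\{1,\dots,n\}$. Its increasing part is $\mathrm{Inc}(R)=\{(a,b)\in R: a<b\}$ and its decreasing part is $\mathrm{Dec}(R)=\{(b,a)\in R: a<b\}$. The weak order on integer relations: $R\le S$ iff $\mathrm{Inc}(S)\subseteq\mathrm{Inc}(R)$ and $\mathrm{Dec}(R)\subseteq\mathrm{Dec}(S)$. An integer poset is an integer relation that is antisymmetric and transitive. *)

theory Defs
  imports "HOL-Algebra.Lattice"
begin

definition int_rel :: "nat \<Rightarrow> (nat \<times> nat) set \<Rightarrow> bool" where
  "int_rel n R \<longleftrightarrow> R \<subseteq> {1..n} \<times> {1..n} \<and> (\<forall>i\<in>{1..n}. (i, i) \<in> R)"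

definition Inc :: "(nat \<times> nat) set \<Rightarrow> (nat \<times> nat) set" where
  "Inc R = {(a, b). (a, b) \<in> R \<and> a < b}"

definition Dec :: "(nat \<times> nat) set \<Rightarrow> (nat \<times> nat) set" where
  "Dec R = {(b, a). (b, a) \<in> R \<and> a < b}"

definition weak_le :: "(nat \<times> nat) set \<Rightarrow> (nat \<times> nat) set \<Rightarrow> bool" where
  "weak_le R S \<longleftrightarrow> Inc S \<subseteq> Inc R \<and> Dec R \<subseteq> Dec S"

definition int_poset :: "nat \<Rightarrow> (nat \<times> nat) set \<Rightarrow> bool" where
  "int_poset n R \<longleftrightarrow> int_rel n R \<and> antisym R \<and> trans R"

definition IPos_weak :: "nat \<Rightarrow> (nat \<times> nat) set gorder" where
  "IPos_weak n = \<lparr>carrier = {R. int_poset n R}, eq = (=), le = weak_le\<rparr>"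

end

theory Submission
  imports Defs
begin

text \<open>
  The meet of two integer posets R and S is constructed explicitly. Its increasing part is
  forced: a lower bound contains Inc R and Inc S and is transitive, so it contains their
  transitive closure. For the decreasing part take the transitive closure of the decreasing
  parts of all lower bounds. The key observation is that for a lower bound T the relation
  Inc R \<union> Dec T is transitive, so an increasing step followed by a decreasing one (or
  vice versa) lands again in one of the two parts; propagating this along transitive closures
  shows that the construction is a poset, hence the greatest lower bound. Since R \<mapsto> R\<inverse>
  reverses the weak order, joins are conjugated meets.
\<close>

lemma trancl_relcomp_absorb_left:
  assumes "E O P \<subseteq> P \<union> E\<^sup>+"
  shows "E\<^sup>+ O P \<subseteq> P \<union> E\<^sup>+"
proof clarify
  fix x y z assume "(x, y) \<in> E\<^sup>+" "(y, z) \<in> P" "(x, z) \<notin> E\<^sup>+"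
  then show "(x, z) \<in> P"
  proof (induction rule: converse_trancl_induct)
    case (base x)
    then show ?case using assms by blast
  next
    case (step x w)
    then show ?case using assms by (blast intro: trancl_into_trancl2)
  qed
qed

lemma trancl_relcomp_absorb_right:
  assumes "P O E \<subseteq> P \<union> E\<^sup>+"
  shows "P O E\<^sup>+ \<subseteq> P \<union> E\<^sup>+"
proof -
  have "E\<inverse> O P\<inverse> \<subseteq> P\<inverse> \<union> (E\<inverse>)\<^sup>+"
    using assms by (auto simp: trancl_converse)
  then have "(E\<inverse>)\<^sup>+ O P\<inverse> \<subseteq> P\<inverse> \<union> (E\<inverse>)\<^sup>+"
    by (rule trancl_relcomp_absorb_left)
  then show ?thesis by (auto simp: trancl_converse)
qed

lemma trans_Id_on_Un: "trans r \<Longrightarrow> trans (Id_on A \<union> r)"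
  unfolding trans_def by blast

lemma trans_Inc_Un_Dec:
  assumes "weak_le T R" "trans R" "trans T" "antisym T"
  shows "trans (Inc R \<union> Dec T)"
proof (rule transI)
  fix a b c assume ab: "(a, b) \<in> Inc R \<union> Dec T" and bc: "(b, c) \<in> Inc R \<union> Dec T"
  have "Inc R \<union> Dec T \<subseteq> R \<inter> T"
    using assms(1) by (auto simp: weak_le_def Inc_def Dec_def)
  then have "(a, c) \<in> R" "(a, c) \<in> T"
    using ab bc assms(2,3) by (blast dest: transD)+
  moreover have "a \<noteq> c"
  proof
    assume "a = c"
    then have "a = b"
      using ab bc \<open>Inc R \<union> Dec T \<subseteq> R \<inter> T\<close> assms(4) by (blast dest: antisymD)
    then show False using ab by (auto simp: Inc_def Dec_def)
  qed
  ultimately show "(a, c) \<in> Inc R \<union> Dec T"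
    by (auto simp: Inc_def Dec_def)
qed

lemma Inc_converse: "Inc (R\<inverse>) = (Dec R)\<inverse>"
  unfolding Inc_def Dec_def by auto

lemma Dec_converse: "Dec (R\<inverse>) = (Inc R)\<inverse>"
  unfolding Inc_def Dec_def by auto

lemma weak_le_converse: "weak_le (R\<inverse>) (S\<inverse>) \<longleftrightarrow> weak_le S R"
  unfolding weak_le_def Inc_converse Dec_converse by auto

lemma int_poset_converse: "int_poset n (R\<inverse>) \<longleftrightarrow> int_poset n R"
  unfolding int_poset_def int_rel_def by auto

lemma weak_le_antisym:
  assumes "int_rel n R" "int_rel n S" "weak_le R S" "weak_le S R"
  shows "R = S"
proof -
  have "R = Id_on {1..n} \<union> Inc R \<union> Dec R" if "int_rel n R" for R
    using that unfolding int_rel_def Inc_def Dec_def by (auto simp: Id_on_def)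
  then show ?thesis using assms unfolding weak_le_def by (metis subset_antisym)
qed

lemma weak_le_refl: "weak_le R R"
  unfolding weak_le_def by simp

lemma weak_le_trans: "weak_le R S \<Longrightarrow> weak_le S T \<Longrightarrow> weak_le R T"
  unfolding weak_le_def by blast

lemma partial_order_IPos_weak: "partial_order (IPos_weak n)"
  by unfold_locales
    (simp_all add: IPos_weak_def int_poset_def weak_le_refl, (meson weak_le_antisym weak_le_trans)+)

definition weak_lower_bounds :: "nat \<Rightarrow> (nat \<times> nat) set \<Rightarrow> (nat \<times> nat) set \<Rightarrow> (nat \<times> nat) set set" where
  "weak_lower_bounds n R S = {T. int_poset n T \<and> weak_le T R \<and> weak_le T S}"

definition meet_inc :: "(nat \<times> nat) set \<Rightarrow> (nat \<times> nat) set \<Rightarrow> (nat \<times> nat) set" where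
  "meet_inc R S = (Inc R \<union> Inc S)\<^sup>+"

definition meet_dec :: "nat \<Rightarrow> (nat \<times> nat) set \<Rightarrow> (nat \<times> nat) set \<Rightarrow> (nat \<times> nat) set" where
  "meet_dec n R S = (\<Union>T \<in> weak_lower_bounds n R S. Dec T)\<^sup>+"

definition weak_meet :: "nat \<Rightarrow> (nat \<times> nat) set \<Rightarrow> (nat \<times> nat) set \<Rightarrow> (nat \<times> nat) set" where
  "weak_meet n R S = Id_on {1..n} \<union> meet_inc R S \<union> meet_dec n R S"

definition weak_join :: "nat \<Rightarrow> (nat \<times> nat) set \<Rightarrow> (nat \<times> nat) set \<Rightarrow> (nat \<times> nat) set" where
  "weak_join n R S = (weak_meet n (R\<inverse>) (S\<inverse>))\<inverse>"

lemma meet_inc_less: "(a, b) \<in> meet_inc R S \<Longrightarrow> a < b"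
  unfolding meet_inc_def by (induction rule: trancl_induct) (auto simp: Inc_def)

lemma meet_dec_greater: "(a, b) \<in> meet_dec n R S \<Longrightarrow> b < a"
  unfolding meet_dec_def by (induction rule: trancl_induct) (auto simp: Dec_def)

lemma meet_inc_subset:
  assumes "int_rel n R" "int_rel n S"
  shows "meet_inc R S \<subseteq> {1..n} \<times> {1..n}"
proof -
  have "Inc R \<union> Inc S \<subseteq> {1..n} \<times> {1..n}"
    using assms by (auto simp: int_rel_def Inc_def)
  then show ?thesis unfolding meet_inc_def by (rule trancl_subset_Sigma)
qed

lemma meet_dec_subset:
  assumes "trans R" "trans S"
  shows "meet_dec n R S \<subseteq> R \<inter> S"
proof -
  have "(\<Union>T \<in> weak_lower_bounds n R S. Dec T) \<subseteq> R \<inter> S"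
    by (auto simp: weak_lower_bounds_def weak_le_def Dec_def)
  then have "meet_dec n R S \<subseteq> (R \<inter> S)\<^sup>+"
    unfolding meet_dec_def by (rule trancl_mono_subset)
  then show ?thesis using assms by (simp add: trans_Int)
qed

lemma Dec_subset_meet_dec: "T \<in> weak_lower_bounds n R S \<Longrightarrow> Dec T \<subseteq> meet_dec n R S"
  unfolding meet_dec_def using trancl_incr by blast

context
  fixes n :: nat and R S :: "(nat \<times> nat) set"
  assumes R: "int_poset n R" and S: "int_poset n S"
begin

lemma meet_inc_relcomp_Dec:
  assumes "T \<in> weak_lower_bounds n R S"
  shows "meet_inc R S O Dec T \<subseteq> Dec T \<union> meet_inc R S"
    and "Dec T O meet_inc R S \<subseteq> Dec T \<union> meet_inc R S"
proof -
  have T: "int_poset n T" "weak_le T R" "weak_le T S"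
    using assms by (auto simp: weak_lower_bounds_def)
  have "trans (Inc R \<union> Dec T)" "trans (Inc S \<union> Dec T)"
    using T R S by (auto simp: int_poset_def intro: trans_Inc_Un_Dec)
  then have "(Inc R \<union> Inc S) O Dec T \<subseteq> Dec T \<union> (Inc R \<union> Inc S)\<^sup>+"
    and "Dec T O (Inc R \<union> Inc S) \<subseteq> Dec T \<union> (Inc R \<union> Inc S)\<^sup>+"
    by (blast dest: transD)+
  then show "meet_inc R S O Dec T \<subseteq> Dec T \<union> meet_inc R S"
    and "Dec T O meet_inc R S \<subseteq> Dec T \<union> meet_inc R S"
    unfolding meet_inc_def
    by (blast dest: trancl_relcomp_absorb_left trancl_relcomp_absorb_right)+
qed

lemma meet_inc_relcomp_meet_dec:
  "meet_inc R S O meet_dec n R S \<subseteq> meet_inc R S \<union> meet_dec n R S"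
proof -
  have "meet_inc R S O (\<Union>T \<in> weak_lower_bounds n R S. Dec T)
      \<subseteq> meet_inc R S \<union> (\<Union>T \<in> weak_lower_bounds n R S. Dec T)\<^sup>+"
    using meet_inc_relcomp_Dec(1) by blast
  then show ?thesis unfolding meet_dec_def by (rule trancl_relcomp_absorb_right)
qed

lemma meet_dec_relcomp_meet_inc:
  "meet_dec n R S O meet_inc R S \<subseteq> meet_inc R S \<union> meet_dec n R S"
proof -
  have "(\<Union>T \<in> weak_lower_bounds n R S. Dec T) O meet_inc R S
      \<subseteq> meet_inc R S \<union> (\<Union>T \<in> weak_lower_bounds n R S. Dec T)\<^sup>+"
    using meet_inc_relcomp_Dec(2) by blast
  then show ?thesis unfolding meet_dec_def by (rule trancl_relcomp_absorb_left)
qed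

lemma trans_meet_inc_Un_meet_dec: "trans (meet_inc R S \<union> meet_dec n R S)"
proof -
  let ?I = "meet_inc R S" and ?D = "meet_dec n R S"
  have "?I O ?I \<subseteq> ?I" "?D O ?D \<subseteq> ?D"
    unfolding meet_inc_def meet_dec_def by (auto intro: trancl_trans)
  then have "(?I \<union> ?D) O (?I \<union> ?D) \<subseteq> ?I \<union> ?D"
    using meet_inc_relcomp_meet_dec meet_dec_relcomp_meet_inc
    by (simp only: relcomp_distrib relcomp_distrib2) blast
  then show ?thesis unfolding trans_def by blast
qed

lemma int_poset_weak_meet: "int_poset n (weak_meet n R S)"
proof -
  let ?X = "meet_inc R S \<union> meet_dec n R S"
  have M: "weak_meet n R S = Id_on {1..n} \<union> ?X"
    by (simp add: weak_meet_def Un_assoc)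
  have "meet_inc R S \<subseteq> {1..n} \<times> {1..n}"
    using R S meet_inc_subset[of n R S] unfolding int_poset_def by blast
  moreover have "meet_dec n R S \<subseteq> R" "R \<subseteq> {1..n} \<times> {1..n}"
    using R S meet_dec_subset[of R S n] by (auto simp: int_poset_def int_rel_def)
  ultimately have rel: "int_rel n (weak_meet n R S)"
    unfolding M int_rel_def by blast
  have irrefl: "(a, a) \<notin> ?X" for a
    using meet_inc_less meet_dec_greater by blast
  have "antisym (weak_meet n R S)"
  proof (rule antisymI, rule ccontr)
    fix a b assume "(a, b) \<in> weak_meet n R S" "(b, a) \<in> weak_meet n R S" "a \<noteq> b"
    then have "(a, b) \<in> ?X" "(b, a) \<in> ?X" unfolding M by auto
    then have "(a, a) \<in> ?X" by (rule transD[OF trans_meet_inc_Un_meet_dec])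
    then show False using irrefl by blast
  qed
  moreover have "trans (weak_meet n R S)"
    unfolding M using trans_meet_inc_Un_meet_dec by (rule trans_Id_on_Un)
  ultimately show ?thesis using rel by (simp add: int_poset_def)
qed

end

lemma Inc_weak_meet: "Inc (weak_meet n R S) = meet_inc R S"
  using meet_inc_less meet_dec_greater by (fastforce simp: weak_meet_def Inc_def)

lemma Dec_weak_meet: "Dec (weak_meet n R S) = meet_dec n R S"
  using meet_inc_less meet_dec_greater by (fastforce simp: weak_meet_def Dec_def)

lemma weak_meet_lower_bound:
  assumes "int_poset n R" "int_poset n S"
  shows "weak_meet n R S \<in> weak_lower_bounds n R S"
proof -
  have "Inc R \<union> Inc S \<subseteq> meet_inc R S"
    unfolding meet_inc_def by (rule trancl_incr)
  moreover have "meet_dec n R S \<subseteq> Dec R \<inter> Dec S"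
    using meet_dec_subset[of R S n] meet_dec_greater assms
    by (fastforce simp: int_poset_def Dec_def)
  ultimately show ?thesis
    using assms by (auto simp: weak_lower_bounds_def weak_le_def Inc_weak_meet Dec_weak_meet
        int_poset_weak_meet)
qed

lemma weak_meet_greatest:
  assumes "T \<in> weak_lower_bounds n R S"
  shows "weak_le T (weak_meet n R S)"
proof -
  have "trans (Inc T)"
    using assms by (auto simp: weak_lower_bounds_def int_poset_def Inc_def trans_def)
  moreover have "Inc R \<union> Inc S \<subseteq> Inc T"
    using assms by (auto simp: weak_lower_bounds_def weak_le_def)
  ultimately have "meet_inc R S \<subseteq> Inc T"
    unfolding meet_inc_def by (metis trancl_id trancl_mono_subset)
  then show ?thesis
    using Dec_subset_meet_dec[OF assms] by (simp add: weak_le_def Inc_weak_meet Dec_weak_meet)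
qed

lemma Lower_IPos_weak:
  assumes "int_poset n R" "int_poset n S"
  shows "Lower (IPos_weak n) {R, S} = weak_lower_bounds n R S"
  using assms by (simp add: Lower_def IPos_weak_def weak_lower_bounds_def imp_conjL imp_disjL
      all_conj_distrib Collect_conj_eq Int_ac)

lemma Upper_IPos_weak:
  assumes "int_poset n R" "int_poset n S"
  shows "Upper (IPos_weak n) {R, S} = {U. int_poset n U \<and> weak_le R U \<and> weak_le S U}"
  using assms
  by (simp add: Upper_def IPos_weak_def imp_conjL imp_disjL all_conj_distrib Collect_conj_eq Int_ac)

lemma greatest_weak_meet:
  assumes "int_poset n R" "int_poset n S"
  shows "greatest (IPos_weak n) (weak_meet n R S) (Lower (IPos_weak n) {R, S})"
proof -
  have "weak_lower_bounds n R S \<subseteq> carrier (IPos_weak n)"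
    by (auto simp: weak_lower_bounds_def IPos_weak_def)
  then show ?thesis
    using weak_meet_lower_bound[OF assms] weak_meet_greatest
    unfolding greatest_def Lower_IPos_weak[OF assms] by (simp add: IPos_weak_def)
qed

lemma least_weak_join:
  assumes "int_poset n R" "int_poset n S"
  shows "least (IPos_weak n) (weak_join n R S) (Upper (IPos_weak n) {R, S})"
proof -
  let ?J = "weak_join n R S"
  have upper_iff: "int_poset n U \<and> weak_le R U \<and> weak_le S U \<longleftrightarrow>
      U\<inverse> \<in> weak_lower_bounds n (R\<inverse>) (S\<inverse>)" for U
    by (simp add: weak_lower_bounds_def int_poset_converse weak_le_converse)
  have "?J\<inverse> \<in> weak_lower_bounds n (R\<inverse>) (S\<inverse>)"
    unfolding weak_join_def converse_converse
    using assms by (simp add: weak_meet_lower_bound int_poset_converse)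
  moreover have "weak_le ?J U" if "U\<inverse> \<in> weak_lower_bounds n (R\<inverse>) (S\<inverse>)" for U
  proof -
    have "weak_le (U\<inverse>) (?J\<inverse>)"
      unfolding weak_join_def converse_converse using that by (rule weak_meet_greatest)
    then show ?thesis by (simp only: weak_le_converse)
  qed
  ultimately show ?thesis
    unfolding least_def Upper_IPos_weak[OF assms] using upper_iff by (auto simp: IPos_weak_def)
qed

theorem theorem1:
  fixes n :: nat
  assumes "n \<ge> 1"
  shows "lattice (IPos_weak n)"
proof -
  interpret partial_order "IPos_weak n"
    by (rule partial_order_IPos_weak)
  show ?thesis
  proof unfold_locales
    fix R S assume "R \<in> carrier (IPos_weak n)" "S \<in> carrier (IPos_weak n)"
    then have "int_poset n R" "int_poset n S"
      by (simp_all add: IPos_weak_def)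
    then show "\<exists>J. least (IPos_weak n) J (Upper (IPos_weak n) {R, S})"
      and "\<exists>M. greatest (IPos_weak n) M (Lower (IPos_weak n) {R, S})"
      by (blast intro: least_weak_join greatest_weak_meet)+
  qed
qed

end
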